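(* Let $f,g$ be complex-valued functions of two variables with $f\perp g$, let $\{a_i\}_{i\ge0},\{b_i\}_{i\ge0}$ be sequences, $x$ a complex number, and $m\ge 0$ an integer, such that $f(a_0,b_0)\ne0$ and $g(b_j,b_0)\neq0$, $f(a_j,x)\ne0$ for $1\le j\le m$. Then $$\sum_{k=0}^{m}\frac{f(a_k,b_k)}{f(a_0,b_0)}\frac{\prod_{j=0}^{k-1}f(a_j,b_0)}{\prod_{j=1}^{k}g(b_j,b_0)}\frac{\prod_{j=0}^{k-1}g(b_j,x)}{\prod_{j=1}^{k}f(a_j,x)}=\frac{\prod_{j=1}^{m}f(a_j,b_0)}{\prod_{j=1}^{m}g(b_j,b_0)}\frac{\prod_{j=1}^{m}g(b_j,x)}{\prod_{j=1}^{m}f(a_j,x)}.$$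
   Context: $f\perp g$ means $g(u,v)f(z,w)-g(u,w)f(z,v)+g(v,w)f(z,u)=0$ for all $u,v,w,z$. Empty products equal $1$. *)

theory Defs
  imports Complex_Main
begin

definition perp :: "(complex \<Rightarrow> complex \<Rightarrow> complex) \<Rightarrow> (complex \<Rightarrow> complex \<Rightarrow> complex) \<Rightarrow> bool" where
  "perp f g \<longleftrightarrow> (\<forall>u v w z. g u v * f z w - g u w * f z v + g v w * f z u = 0)"

end

theory Submission
  imports Defs
begin

text \<open>With \<open>q j = f(a_j,b_0) g(b_j,x) / (g(b_j,b_0) f(a_j,x))\<close>, the right-hand side is
  \<open>\<Prod>j=1..m. q j\<close>. The relation \<open>f \<perp> g\<close>, instantiated at \<open>(u,v,w,z) = (b_k,b_0,x,a_k)\<close>,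
  says \<open>q k - 1 = f(a_k,b_k) g(b_0,x) / (g(b_k,b_0) f(a_k,x))\<close>; hence the \<open>k\<close>-th summand
  (\<open>k \<ge> 1\<close>) is \<open>(q k - 1) \<Prod>j=1..<k. q j\<close>, the increment of the partial products of \<open>q\<close>,
  and the sum telescopes.\<close>

lemma sum_telescope_prod:
  fixes q :: "nat \<Rightarrow> 'a::comm_ring_1"
  shows "1 + (\<Sum>k=1..m. (q k - 1) * (\<Prod>j=1..<k. q j)) = (\<Prod>j=1..m. q j)"
proof (induction m)
  case 0
  then show ?case by simp
next
  case (Suc m)
  have "(\<Prod>j=1..Suc m. q j) = (\<Prod>j=1..m. q j) * q (Suc m)"
    by (simp add: prod.nat_ivl_Suc')
  with Suc.IH show ?case
    by (simp add: algebra_simps atLeastLessThanSuc_atLeastAtMost)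
qed

lemma perp_ratio_minus_one:
  assumes "perp f g" "g u v \<noteq> 0" "f z w \<noteq> 0"
  shows "f z v * g u w / (g u v * f z w) - 1 = f z u * g v w / (g u v * f z w)"
proof -
  have "g u v * f z w - g u w * f z v + g v w * f z u = 0"
    using assms(1) unfolding perp_def by blast
  then have "g u w * f z v - g u v * f z w = g v w * f z u"
    by algebra
  then show ?thesis
    using assms(2,3) by (simp add: field_simps)
qed

theorem corollary3p1:
  fixes f g :: "complex \<Rightarrow> complex \<Rightarrow> complex"
    and a b :: "nat \<Rightarrow> complex" and x :: complex and m :: nat
  assumes "perp f g"
    and "f (a 0) (b 0) \<noteq> 0"
    and "\<And>j. 1 \<le> j \<Longrightarrow> j \<le> m \<Longrightarrow> g (b j) (b 0) \<noteq> 0"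
    and "\<And>j. 1 \<le> j \<Longrightarrow> j \<le> m \<Longrightarrow> f (a j) x \<noteq> 0"
  shows "(\<Sum>k=0..m. (f (a k) (b k) / f (a 0) (b 0))
            * ((\<Prod>j=0..<k. f (a j) (b 0)) / (\<Prod>j=1..k. g (b j) (b 0)))
            * ((\<Prod>j=0..<k. g (b j) x) / (\<Prod>j=1..k. f (a j) x)))
         = ((\<Prod>j=1..m. f (a j) (b 0)) / (\<Prod>j=1..m. g (b j) (b 0)))
           * ((\<Prod>j=1..m. g (b j) x) / (\<Prod>j=1..m. f (a j) x))"
proof -
  let ?S = "\<lambda>k. (f (a k) (b k) / f (a 0) (b 0))
            * ((\<Prod>j=0..<k. f (a j) (b 0)) / (\<Prod>j=1..k. g (b j) (b 0)))
            * ((\<Prod>j=0..<k. g (b j) x) / (\<Prod>j=1..k. f (a j) x))"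
  define q where "q j = f (a j) (b 0) * g (b j) x / (g (b j) (b 0) * f (a j) x)" for j
  have summand: "?S k = (q k - 1) * (\<Prod>j=1..<k. q j)" if "1 \<le> k" "k \<le> m" for k
  proof -
    have "q k - 1 = f (a k) (b k) * g (b 0) x / (g (b k) (b 0) * f (a k) x)"
      unfolding q_def using perp_ratio_minus_one assms that by blast
    moreover have "(\<Prod>j=0..<k. h j) = h 0 * (\<Prod>j=1..<k. h j)" for h :: "nat \<Rightarrow> complex"
      using that by (simp add: prod.atLeast_Suc_lessThan)
    moreover have "(\<Prod>j=1..k. h j) = (\<Prod>j=1..<k. h j) * h k" for h :: "nat \<Rightarrow> complex"
      using that by (cases k) (simp_all add: prod.nat_ivl_Suc' atLeastLessThanSuc_atLeastAtMost)
    ultimately show ?thesis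
      using assms(2) by (simp add: q_def prod_dividef prod.distrib field_simps)
  qed
  have "(\<Sum>k=0..m. ?S k) = ?S 0 + (\<Sum>k=1..m. ?S k)"
    by (simp add: sum.atLeast_Suc_atMost)
  also have "\<dots> = 1 + (\<Sum>k=1..m. (q k - 1) * (\<Prod>j=1..<k. q j))"
    using assms(2) summand by (auto intro: sum.cong)
  also have "\<dots> = (\<Prod>j=1..m. q j)"
    by (rule sum_telescope_prod)
  also have "\<dots> = ((\<Prod>j=1..m. f (a j) (b 0)) / (\<Prod>j=1..m. g (b j) (b 0)))
           * ((\<Prod>j=1..m. g (b j) x) / (\<Prod>j=1..m. f (a j) x))"
    by (simp add: q_def prod_dividef prod.distrib)
  finally show ?thesis .
qed

end
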